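(* Assume the WLPR scheme $S_{d,\mathbf{w}^\lambda}$ is well defined, with mask $\mathbf{a}=(a_m)_{m\in\mathbb{Z}}$. Then $S_{d,\mathbf{w}^\lambda}$ is odd-symmetric: $a_m=a_{-m}$ for all $m\in\mathbb{Z}$.
   Context: Let $\phi:[0,1]\to[0,1]$ be non-increasing with $\phi(0)=1$, $\omega(x)=\phi(|x|)$ for $|x|\le1$ and $0$ otherwise, $\lambda\in(0,\infty)\setminus\mathbb{N}$, and $w^\lambda_m=\omega(m/\lambda)$, $m\in\mathbb{Z}$. Let $d\ge0$ be an integer and $\Pi_d$ the real polynomials of degree at most $d$. For $i\in\{0,1\}$ let $M_i=\{m\in\mathbb{Z}: m\equiv i\pmod 2,\ |m|<\lambda\}$. The weighted local polynomial regression scheme $S_{d,\mathbf{w}^\lambda}$ maps a real sequence $\mathbf{f}=(f_j)_{j\in\mathbb{Z}}$ to $(S\mathbf{f})_{2j+i}=\hat p(0)$ ($i\in\{0,1\}$, $j\in\mathbb{Z}$), where $\hat p$ minimizes $\sum_{m\in M_i} w^\lambda_m(f_{j+(m+i)/2}-p(m))^2$ over $p\in\Pi_d$; "well defined" means $\hat p(0)$ does not depend on the choice of minimizer. The scheme is then linear, $(S\mathbf{f})_{2j+i}=\sum_{m\in M_i}a_m f_{j+(m+i)/2}$, and its mask is $\mathbf{a}=(a_m)_{m\in\mathbb{Z}}$ with $a_m=0$ for $|m|\ge\lambda$. *)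

theory Defs
  imports "HOL-Computational_Algebra.Polynomial" Complex_Main
begin

definition admissible_phi :: "(real \<Rightarrow> real) \<Rightarrow> bool" where
  "admissible_phi phi \<longleftrightarrow>
     (\<forall>x. 0 \<le> x \<and> x \<le> 1 \<longrightarrow> 0 \<le> phi x \<and> phi x \<le> 1) \<and>
     (\<forall>x y. 0 \<le> x \<and> x \<le> y \<and> y \<le> 1 \<longrightarrow> phi y \<le> phi x) \<and>
     phi 0 = 1"

definition omega :: "(real \<Rightarrow> real) \<Rightarrow> real \<Rightarrow> real" where
  "omega phi x = (if \<bar>x\<bar> \<le> 1 then phi \<bar>x\<bar> else 0)"

definition wlam :: "(real \<Rightarrow> real) \<Rightarrow> real \<Rightarrow> int \<Rightarrow> real" where
  "wlam phi lam m = omega phi (real_of_int m / lam)"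

definition Mset :: "real \<Rightarrow> int \<Rightarrow> int set" where
  "Mset lam i = {m. m mod 2 = i mod 2 \<and> \<bar>real_of_int m\<bar> < lam}"

definition wlpr_cost ::
  "(real \<Rightarrow> real) \<Rightarrow> real \<Rightarrow> (int \<Rightarrow> real) \<Rightarrow> int \<Rightarrow> int \<Rightarrow> real poly \<Rightarrow> real" where
  "wlpr_cost phi lam f i j p =
     (\<Sum>m\<in>Mset lam i. wlam phi lam m * (f (j + (m + i) div 2) - poly p (real_of_int m))\<^sup>2)"

definition wlpr_minimizer ::
  "(real \<Rightarrow> real) \<Rightarrow> real \<Rightarrow> nat \<Rightarrow> (int \<Rightarrow> real) \<Rightarrow> int \<Rightarrow> int \<Rightarrow> real poly \<Rightarrow> bool" where
  "wlpr_minimizer phi lam d f i j p \<longleftrightarrow>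
     degree p \<le> d \<and>
     (\<forall>q. degree q \<le> d \<longrightarrow> wlpr_cost phi lam f i j p \<le> wlpr_cost phi lam f i j q)"

definition wlpr_well_defined :: "(real \<Rightarrow> real) \<Rightarrow> real \<Rightarrow> nat \<Rightarrow> bool" where
  "wlpr_well_defined phi lam d \<longleftrightarrow>
     (\<forall>f i j p q. i \<in> {0, 1} \<longrightarrow>
        wlpr_minimizer phi lam d f i j p \<longrightarrow> wlpr_minimizer phi lam d f i j q \<longrightarrow>
        poly p 0 = poly q 0)"

text \<open>a is the mask: (S f)_{2j+i} = sum over M_i of a_m f_{j+(m+i)/2}, and a_m = 0 for |m| >= lambda.\<close>
definition wlpr_mask :: "(real \<Rightarrow> real) \<Rightarrow> real \<Rightarrow> nat \<Rightarrow> (int \<Rightarrow> real) \<Rightarrow> bool" where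
  "wlpr_mask phi lam d a \<longleftrightarrow>
     (\<forall>m. lam \<le> \<bar>real_of_int m\<bar> \<longrightarrow> a m = 0) \<and>
     (\<forall>f i j p. i \<in> {0, 1} \<longrightarrow> wlpr_minimizer phi lam d f i j p \<longrightarrow>
        poly p 0 = (\<Sum>m\<in>Mset lam i. a m * f (j + (m + i) div 2)))"

end

theory Submission
  imports Defs
begin

text \<open>
  Reflecting the data, \<open>k \<mapsto> f (i - k)\<close>, maps the parity class \<open>Mset lam i\<close> onto itself and
  leaves the even weights unchanged, so \<open>p(x) \<mapsto> p(-x)\<close> carries least-squares fits of \<open>f\<close> to
  least-squares fits of the reflected data without changing the value at \<open>0\<close>. Feeding the mask
  formula the data that is \<open>1\<close> exactly at the sample weighted by \<open>a m\<close>, whose reflection is the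
  data that is \<open>1\<close> exactly at the sample weighted by \<open>a (- m)\<close>, gives \<open>a m = p(0) = a (- m)\<close>.
  Such fits exist because weighted least squares on finitely many nodes is an orthogonal
  projection for a positive semidefinite inner product, built degree by degree as in Gram--Schmidt.
\<close>

definition weighted_inner :: "'a set \<Rightarrow> ('a \<Rightarrow> real) \<Rightarrow> ('a \<Rightarrow> real) \<Rightarrow> ('a \<Rightarrow> real) \<Rightarrow> real" where
  "weighted_inner M w u v = (\<Sum>m\<in>M. w m * u m * v m)"

lemma weighted_inner_diff_scale_left:
  "weighted_inner M w (\<lambda>m. u m - c * v m) z = weighted_inner M w u z - c * weighted_inner M w v z"
  unfolding weighted_inner_def by (simp add: sum_subtractf sum_distrib_left algebra_simps)

lemma weighted_inner_add_right:
  "weighted_inner M w u (\<lambda>m. v m + z m) = weighted_inner M w u v + weighted_inner M w u z"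
  unfolding weighted_inner_def by (simp add: sum.distrib algebra_simps)

lemma weighted_inner_scale_right:
  "weighted_inner M w u (\<lambda>m. c * v m) = c * weighted_inner M w u v"
  unfolding weighted_inner_def by (simp add: sum_distrib_left algebra_simps)

lemma weighted_inner_self_eq_0:
  assumes "finite M" and "\<And>m. m \<in> M \<Longrightarrow> 0 \<le> w m" and "weighted_inner M w h h = 0"
  shows "weighted_inner M w u h = 0"
proof -
  have "w m * h m * h m = 0" if "m \<in> M" for m
    using assms that unfolding weighted_inner_def
    by (subst (asm) sum_nonneg_eq_0_iff) (auto simp: mult.assoc)
  then show ?thesis
    unfolding weighted_inner_def by (intro sum.neutral) (auto simp: mult.commute mult.left_commute)
qed

lemma weighted_projection_on_line:
  assumes "finite M" and "\<And>m. m \<in> M \<Longrightarrow> 0 \<le> w m"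
  obtains c where "weighted_inner M w (\<lambda>m. u m - c * h m) h = 0"
proof (cases "weighted_inner M w h h = 0")
  case True
  then show ?thesis
    using that[of 0] weighted_inner_self_eq_0[OF assms] by simp
next
  case False
  show ?thesis
  proof (rule that)
    show "weighted_inner M w (\<lambda>m. u m - weighted_inner M w u h / weighted_inner M w h h * h m) h = 0"
      unfolding weighted_inner_diff_scale_left using False by simp
  qed
qed

definition polys_below :: "nat \<Rightarrow> 'a::zero poly set" where
  "polys_below n = {q. \<forall>k\<ge>n. coeff q k = 0}"

lemma polys_below_Suc_iff: "q \<in> polys_below (Suc d) \<longleftrightarrow> degree q \<le> d"
proof
  show "q \<in> polys_below (Suc d) \<Longrightarrow> degree q \<le> d"
    unfolding polys_below_def by (intro degree_le) auto
  show "degree q \<le> d \<Longrightarrow> q \<in> polys_below (Suc d)"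
    unfolding polys_below_def by (auto intro: coeff_eq_0)
qed

lemma polys_below_Suc_decompose:
  fixes q h :: "'a::comm_ring_1 poly"
  assumes q: "q \<in> polys_below (Suc n)" and h: "h \<in> polys_below (Suc n)" and "coeff h n = 1"
  shows "q - smult (coeff q n) h \<in> polys_below n"
  unfolding polys_below_def
proof (intro CollectI allI impI)
  fix k assume "n \<le> k"
  then consider "k = n" | "Suc n \<le> k" by linarith
  then show "coeff (q - smult (coeff q n) h) k = 0"
  proof cases
    case 2
    then show ?thesis using q h unfolding polys_below_def by simp
  qed (simp add: \<open>coeff h n = 1\<close>)
qed

lemma weighted_projection_polys_below:
  assumes "finite M" and "\<And>m. m \<in> M \<Longrightarrow> 0 \<le> w m"
  shows "\<exists>p\<in>polys_below n. \<forall>q\<in>polys_below n.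
           weighted_inner M w (\<lambda>m. F m - poly p (x m)) (\<lambda>m. poly q (x m)) = 0"
proof (induction n arbitrary: F)
  case 0
  have "polys_below 0 = {0 :: real poly}" unfolding polys_below_def by (auto simp: poly_eq_iff)
  then show ?case by (simp add: weighted_inner_def)
next
  case (Suc n)
  let ?ip = "weighted_inner M w"
  obtain p where p: "p \<in> polys_below n"
    and p_orth: "\<And>s. s \<in> polys_below n \<Longrightarrow> ?ip (\<lambda>m. F m - poly p (x m)) (\<lambda>m. poly s (x m)) = 0"
    using Suc.IH[of F] by blast
  \<comment> \<open>The new direction \<open>h\<close> is \<open>X ^ n\<close> minus its projection onto lower degrees.\<close>
  obtain p' where p': "p' \<in> polys_below n"
    and p'_orth: "\<And>s. s \<in> polys_below n \<Longrightarrow> ?ip (\<lambda>m. x m ^ n - poly p' (x m)) (\<lambda>m. poly s (x m)) = 0"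
    using Suc.IH[of "\<lambda>m. x m ^ n"] by blast
  define h where "h = monom 1 n - p'"
  have h: "h \<in> polys_below (Suc n)" and h_lead: "coeff h n = 1"
    using p' unfolding h_def polys_below_def by (auto simp: coeff_monom)
  have h_orth: "?ip (\<lambda>m. poly h (x m)) (\<lambda>m. poly s (x m)) = 0" if "s \<in> polys_below n" for s
    using p'_orth[OF that] by (simp add: h_def poly_monom)
  obtain c where c: "?ip (\<lambda>m. F m - poly p (x m) - c * poly h (x m)) (\<lambda>m. poly h (x m)) = 0"
    using weighted_projection_on_line[where u = "\<lambda>m. F m - poly p (x m)" and h = "\<lambda>m. poly h (x m)",
        OF assms] .
  have residual: "(\<lambda>m. F m - poly (p + smult c h) (x m))
                  = (\<lambda>m. F m - poly p (x m) - c * poly h (x m))"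
    by (simp add: algebra_simps)
  show ?case
  proof (intro bexI ballI)
    show "p + smult c h \<in> polys_below (Suc n)"
      using p h unfolding polys_below_def by auto
  next
    fix q :: "real poly" assume q: "q \<in> polys_below (Suc n)"
    define s where "s = q - smult (coeff q n) h"
    have s: "s \<in> polys_below n"
      unfolding s_def using polys_below_Suc_decompose[OF q h h_lead] .
    have q_split: "(\<lambda>m. poly q (x m)) = (\<lambda>m. poly s (x m) + coeff q n * poly h (x m))"
      by (simp add: s_def)
    show "?ip (\<lambda>m. F m - poly (p + smult c h) (x m)) (\<lambda>m. poly q (x m)) = 0"
      unfolding residual q_split weighted_inner_add_right weighted_inner_scale_right
      using c p_orth[OF s] h_orth[OF s]
      by (simp only: weighted_inner_diff_scale_left)
  qed
qed

lemma weighted_sq_error_le_if_orthogonal: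
  assumes "\<And>m. m \<in> M \<Longrightarrow> 0 \<le> w m"
    and "weighted_inner M w (\<lambda>m. F m - P m) (\<lambda>m. P m - Q m) = 0"
  shows "(\<Sum>m\<in>M. w m * (F m - P m)\<^sup>2) \<le> (\<Sum>m\<in>M. w m * (F m - Q m)\<^sup>2)"
proof -
  have "(\<Sum>m\<in>M. w m * (F m - Q m)\<^sup>2)
        = (\<Sum>m\<in>M. w m * (F m - P m)\<^sup>2) + 2 * weighted_inner M w (\<lambda>m. F m - P m) (\<lambda>m. P m - Q m)
          + (\<Sum>m\<in>M. w m * (P m - Q m)\<^sup>2)"
    unfolding weighted_inner_def
    by (simp add: sum.distrib[symmetric] sum_distrib_left power2_eq_square algebra_simps)
  moreover have "(\<Sum>m\<in>M. w m * (P m - Q m)\<^sup>2) \<ge> 0"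
    using assms(1) by (intro sum_nonneg) simp
  ultimately show ?thesis using assms(2) by simp
qed

lemma finite_Mset: "finite (Mset lam i)"
proof (rule finite_subset)
  show "Mset lam i \<subseteq> {-\<lceil>lam\<rceil>..\<lceil>lam\<rceil>}"
  proof
    fix m assume "m \<in> Mset lam i"
    then have "\<bar>real_of_int m\<bar> < lam" by (simp add: Mset_def)
    then have "\<bar>real_of_int m\<bar> \<le> real_of_int \<lceil>lam\<rceil>"
      using le_of_int_ceiling[of lam] by linarith
    then show "m \<in> {-\<lceil>lam\<rceil>..\<lceil>lam\<rceil>}"
      by (simp add: abs_le_iff)
  qed
qed simp

lemma wlam_nonneg: "admissible_phi phi \<Longrightarrow> 0 \<le> wlam phi lam m"
  unfolding admissible_phi_def wlam_def omega_def by auto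

lemma wlam_uminus: "wlam phi lam (- m) = wlam phi lam m"
  unfolding wlam_def omega_def by simp

lemma wlpr_minimizer_exists:
  assumes "admissible_phi phi"
  obtains p where "wlpr_minimizer phi lam d f i j p"
proof -
  let ?F = "\<lambda>m. f (j + (m + i) div 2)" and ?x = "real_of_int"
  obtain p where p: "p \<in> polys_below (Suc d)"
    and p_orth: "\<And>q. q \<in> polys_below (Suc d) \<Longrightarrow>
        weighted_inner (Mset lam i) (wlam phi lam) (\<lambda>m. ?F m - poly p (?x m)) (\<lambda>m. poly q (?x m)) = 0"
    using weighted_projection_polys_below[where M = "Mset lam i" and w = "wlam phi lam" and n = "Suc d"
        and F = ?F and x = ?x, OF finite_Mset wlam_nonneg[OF assms]] by blast
  have "wlpr_cost phi lam f i j p \<le> wlpr_cost phi lam f i j q" if "degree q \<le> d" for q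
  proof -
    have "p - q \<in> polys_below (Suc d)"
      using p that by (simp add: polys_below_Suc_iff degree_diff_le)
    then have "weighted_inner (Mset lam i) (wlam phi lam)
                 (\<lambda>m. ?F m - poly p (?x m)) (\<lambda>m. poly p (?x m) - poly q (?x m)) = 0"
      using p_orth[OF \<open>p - q \<in> polys_below (Suc d)\<close>] by simp
    then show ?thesis
      unfolding wlpr_cost_def by (rule weighted_sq_error_le_if_orthogonal[OF wlam_nonneg[OF assms]])
  qed
  with p show ?thesis
    using that unfolding wlpr_minimizer_def polys_below_Suc_iff by blast
qed

lemma uminus_mem_Mset: "m \<in> Mset lam i \<Longrightarrow> - m \<in> Mset lam i"
  unfolding Mset_def by (simp add: zmod_zminus1_eq_if)

lemma sum_Mset_uminus: "(\<Sum>m\<in>Mset lam i. g (- m)) = (\<Sum>m\<in>Mset lam i. g m)"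
proof -
  have "uminus ` Mset lam i = Mset lam i"
    using uminus_mem_Mset by (force intro: image_eqI[where x = "- _"])
  moreover have "inj_on uminus (Mset lam i)"
    by (simp add: inj_on_def)
  ultimately show ?thesis
    using sum.reindex[of uminus "Mset lam i" g] by (simp add: comp_def)
qed

lemma Mset_index_reflect:
  "m \<in> Mset lam i \<Longrightarrow> i - (m + i) div 2 = (- m + i) div 2"
  unfolding Mset_def by auto presburger

lemma wlpr_cost_reflect:
  "wlpr_cost phi lam (\<lambda>k. f (i - k)) i j (pcompose p [:0, -1:]) = wlpr_cost phi lam f i (- j) p"
proof -
  have "wlpr_cost phi lam (\<lambda>k. f (i - k)) i j (pcompose p [:0, -1:])
      = (\<Sum>m\<in>Mset lam i. wlam phi lam (- m) * (f (- j + (- m + i) div 2) - poly p (real_of_int (- m)))\<^sup>2)"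
    unfolding wlpr_cost_def
  proof (intro sum.cong refl)
    fix m assume "m \<in> Mset lam i"
    then have index: "i - (j + (m + i) div 2) = - j + (- m + i) div 2"
      using Mset_index_reflect by fastforce
    show "wlam phi lam m * ((\<lambda>k. f (i - k)) (j + (m + i) div 2) - poly (pcompose p [:0, -1:]) (real_of_int m))\<^sup>2
        = wlam phi lam (- m) * (f (- j + (- m + i) div 2) - poly p (real_of_int (- m)))\<^sup>2"
      unfolding index[symmetric] by (simp add: poly_pcompose wlam_uminus)
  qed
  also have "\<dots> = wlpr_cost phi lam f i (- j) p"
    unfolding wlpr_cost_def by (rule sum_Mset_uminus)
  finally show ?thesis .
qed

lemma wlpr_minimizer_reflect:
  assumes "wlpr_minimizer phi lam d f i j p"
  shows "wlpr_minimizer phi lam d (\<lambda>k. f (i - k)) i (- j) (pcompose p [:0, -1:])"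
  unfolding wlpr_minimizer_def
proof (intro conjI allI impI)
  show "degree (pcompose p [:0, -1:]) \<le> d"
    using assms unfolding wlpr_minimizer_def by (simp add: degree_pcompose)
next
  fix q :: "real poly" assume q: "degree q \<le> d"
  have "wlpr_cost phi lam (\<lambda>k. f (i - k)) i (- j) (pcompose p [:0, -1:]) = wlpr_cost phi lam f i j p"
    using wlpr_cost_reflect[of phi lam f i "- j" p] by simp
  also have "\<dots> \<le> wlpr_cost phi lam f i j (pcompose q [:0, -1:])"
    using assms q unfolding wlpr_minimizer_def by (simp add: degree_pcompose)
  also have "\<dots> = wlpr_cost phi lam (\<lambda>k. f (i - k)) i (- j) q"
    using wlpr_cost_reflect[of phi lam "\<lambda>k. f (i - k)" i j q] by simp
  finally show "wlpr_cost phi lam (\<lambda>k. f (i - k)) i (- j) (pcompose p [:0, -1:])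
                \<le> wlpr_cost phi lam (\<lambda>k. f (i - k)) i (- j) q" .
qed

lemma wlpr_mask_at_unit_data:
  assumes "wlpr_mask phi lam d a" and "i \<in> {0, 1}" and "m \<in> Mset lam i"
    and "wlpr_minimizer phi lam d (\<lambda>k. if k = (m + i) div 2 then 1 else 0) i 0 p"
  shows "a m = poly p 0"
proof -
  have "((m' + i) div 2 = (m + i) div 2) = (m' = m)" if "m' \<in> Mset lam i" for m'
    using that assms(3) unfolding Mset_def by auto presburger
  then have "poly p 0 = (\<Sum>m'\<in>Mset lam i. if m' = m then a m' else 0)"
    using assms(1,2,4) unfolding wlpr_mask_def by (auto intro!: sum.cong)
  then show ?thesis
    using assms(3) finite_Mset by simp
qed

text \<open>
  Only the existence of a mask is used: \<open>wlpr_mask\<close> already prescribes the value at \<open>0\<close> of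
  every minimizer, so well-definedness and the conditions on \<open>lam\<close> are not needed.
\<close>

theorem lemma3p5:
  fixes phi :: "real \<Rightarrow> real" and lam :: real and d :: nat and a :: "int \<Rightarrow> real"
  assumes "admissible_phi phi"
    and "0 < lam" and "lam \<notin> \<nat>"
    and "wlpr_well_defined phi lam d"
    and "wlpr_mask phi lam d a"
  shows "\<forall>m. a m = a (- m)"
proof
  fix m
  show "a m = a (- m)"
  proof (cases "lam \<le> \<bar>real_of_int m\<bar>")
    case True
    then show ?thesis using assms(5) unfolding wlpr_mask_def by simp
  next
    case False
    define i where "i = m mod 2"
    have i: "i \<in> {0, 1}" and m: "m \<in> Mset lam i"
      using False unfolding i_def Mset_def by auto
    define f :: "int \<Rightarrow> real" where "f k = (if k = (m + i) div 2 then 1 else 0)" for k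
    obtain p where p: "wlpr_minimizer phi lam d f i 0 p"
      using wlpr_minimizer_exists[OF assms(1)] .
    have "(\<lambda>k. f (i - k)) = (\<lambda>k. if k = (- m + i) div 2 then 1 else 0)"
      unfolding f_def using Mset_index_reflect[OF m] by auto
    then have "wlpr_minimizer phi lam d (\<lambda>k. if k = (- m + i) div 2 then 1 else 0) i 0
                 (pcompose p [:0, -1:])"
      using wlpr_minimizer_reflect[OF p] by simp
    then have "a (- m) = poly p 0"
      using wlpr_mask_at_unit_data[OF assms(5) i uminus_mem_Mset[OF m]] by (simp add: poly_pcompose)
    moreover have "a m = poly p 0"
      using wlpr_mask_at_unit_data[OF assms(5) i m] p unfolding f_def by simp
    ultimately show ?thesis by simp
  qed
qed

end
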